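(* Let $\epsilon_{2q^*}$ be the smallest number such that $\big\|\sum_{j\in J}g_j\big\|^2\ge(1-\epsilon_{2q^*})\sum_{j\in J}\|g_j\|^2$ for all $J\subseteq\{1,\dots,q\}$ with $|J|\le 2q^*$ and all $g_j\in H_j$, $j\in J$. Then $\rho_{q^*}<1$ if and only if $\epsilon_{2q^*}<1$.
   Context: Let $q\ge1$ and let $X=(X_1,\dots,X_q)^T$ be a random vector with real-valued components. The space $L^2(\mathbb P^X)$ carries the inner product $\langle g,h\rangle=\mathbb E[g(X)h(X)]$ and norm $\|g\|=\langle g,g\rangle^{1/2}$. Let $H_q=L^2(\mathbb P^{X_q})$ and $H_j=\{h\in L^2(\mathbb P^{X_j}):\mathbb E[h(X_j)]=0\}$ for $j<q$, viewed as subspaces of $L^2(\mathbb P^X)$ via $x\mapsto h(x_j)$; for $J\subseteq\{1,\dots,q\}$ let $H_J=\sum_{j\in J}H_j$ (with $H_\emptyset=\{0\}$). Let $q^*\ge1$ be an integer. Let $\rho_{q^*}$ be the supremum of $\langle h_1,h_2\rangle/(\|h_1\|\|h_2\|)$ over all nonzero $h_1\in H_{J_1}$, $h_2\in H_{J_2}$ and all $J_1,J_2\subseteq\{1,\dots,q\}$ with $J_1\cap J_2=\emptyset$ and $|J_1|,|J_2|\le q^*$. *)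

theory Defs
  imports "HOL-Probability.Probability"
begin

text \<open>Random vector X = (X 1, ..., X q) on a probability space M. Elements of L2(P^X)
  are represented as the random variables g(X) on M; the inner product is E[g(X) h(X)].\<close>

definition l2_inner :: "'a measure \<Rightarrow> ('a \<Rightarrow> real) \<Rightarrow> ('a \<Rightarrow> real) \<Rightarrow> real" where
  "l2_inner M f g = integral\<^sup>L M (\<lambda>\<omega>. f \<omega> * g \<omega>)"

definition l2_norm :: "'a measure \<Rightarrow> ('a \<Rightarrow> real) \<Rightarrow> real" where
  "l2_norm M f = sqrt (l2_inner M f f)"

definition Hsp :: "'a measure \<Rightarrow> (nat \<Rightarrow> 'a \<Rightarrow> real) \<Rightarrow> nat \<Rightarrow> nat \<Rightarrow> ('a \<Rightarrow> real) set" where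
  "Hsp M X q j = {(\<lambda>\<omega>. h (X j \<omega>)) | h. h \<in> borel_measurable borel
       \<and> integrable M (\<lambda>\<omega>. (h (X j \<omega>))\<^sup>2)
       \<and> (j < q \<longrightarrow> integral\<^sup>L M (\<lambda>\<omega>. h (X j \<omega>)) = 0)}"

definition HJ :: "'a measure \<Rightarrow> (nat \<Rightarrow> 'a \<Rightarrow> real) \<Rightarrow> nat \<Rightarrow> nat set \<Rightarrow> ('a \<Rightarrow> real) set" where
  "HJ M X q J = {(\<lambda>\<omega>. \<Sum>j\<in>J. g j \<omega>) | g. \<forall>j\<in>J. g j \<in> Hsp M X q j}"

text \<open>rho_{q*}, as an extended real (sup of the empty set is -infinity).\<close>
definition rho :: "'a measure \<Rightarrow> (nat \<Rightarrow> 'a \<Rightarrow> real) \<Rightarrow> nat \<Rightarrow> nat \<Rightarrow> ereal" where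
  "rho M X q qs = Sup {ereal (l2_inner M h1 h2 / (l2_norm M h1 * l2_norm M h2)) | J1 J2 h1 h2.
      J1 \<subseteq> {1..q} \<and> J2 \<subseteq> {1..q} \<and> J1 \<inter> J2 = {} \<and> card J1 \<le> qs \<and> card J2 \<le> qs
      \<and> h1 \<in> HJ M X q J1 \<and> h2 \<in> HJ M X q J2 \<and> l2_norm M h1 \<noteq> 0 \<and> l2_norm M h2 \<noteq> 0}"

definition eps :: "'a measure \<Rightarrow> (nat \<Rightarrow> 'a \<Rightarrow> real) \<Rightarrow> nat \<Rightarrow> nat \<Rightarrow> real" where
  "eps M X q m = Inf {e. \<forall>J g. J \<subseteq> {1..q} \<and> card J \<le> m \<and> (\<forall>j\<in>J. g j \<in> Hsp M X q j) \<longrightarrow>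
      (l2_norm M (\<lambda>\<omega>. \<Sum>j\<in>J. g j \<omega>))\<^sup>2 \<ge> (1 - e) * (\<Sum>j\<in>J. (l2_norm M (g j))\<^sup>2)}"

end

theory Submission
  imports Defs
begin

(* Both quantities are rephrased through predicates on a constant: corr_bounded r (all
   correlations are <= r) and riesz_lower m e (the defining inequality of epsilon_m holds
   with e), so that rho < 1 and epsilon < 1 mean that such constants exist below 1.
   - corr_bounded r with 0 <= r < 1 gives ||f + g||^2 >= (1 - r)(||f||^2 + ||g||^2) for f, g
     from disjoint blocks; peeling off one component at a time yields the Riesz bound on
     sets of size <= q*, and one further split handles sets of size <= 2q*.
   - Conversely, the Riesz inequality applied to h1/||h1|| - h2/||h2||, together with
     ||h||^2 <= |J| \<Sum> ||g_j||^2, bounds every correlation by 1 - (1 - e)/q*. *)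

definition square_integrable :: "'a measure \<Rightarrow> ('a \<Rightarrow> real) \<Rightarrow> bool" where
  "square_integrable M f \<longleftrightarrow> f \<in> borel_measurable M \<and> integrable M (\<lambda>w. (f w)\<^sup>2)"

(* Products of square-integrable functions are integrable, since |f g| <= f^2 + g^2;
   this makes the inner product l2_inner well behaved. *)
lemma square_integrable_mult_integrable:
  assumes "square_integrable M f" "square_integrable M g"
  shows "integrable M (\<lambda>w. f w * g w)"
proof (rule Bochner_Integration.integrable_bound[where f="\<lambda>w. (f w)\<^sup>2 + (g w)\<^sup>2"])
  show "integrable M (\<lambda>w. (f w)\<^sup>2 + (g w)\<^sup>2)" using assms by (simp add: square_integrable_def)
  show "(\<lambda>w. f w * g w) \<in> borel_measurable M" using assms by (auto simp: square_integrable_def)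
  have "\<bar>x * y\<bar> \<le> x\<^sup>2 + y\<^sup>2" for x y :: real
  proof -
    have "2 * (\<bar>x\<bar> * \<bar>y\<bar>) \<le> x\<^sup>2 + y\<^sup>2"
      using sum_squares_bound[of "\<bar>x\<bar>" "\<bar>y\<bar>"] by simp
    moreover have "0 \<le> \<bar>x\<bar> * \<bar>y\<bar>" by simp
    ultimately show ?thesis unfolding abs_mult by linarith
  qed
  then show "AE w in M. norm (f w * g w) \<le> norm ((f w)\<^sup>2 + (g w)\<^sup>2)" by simp
qed

lemma square_integrable_add:
  assumes "square_integrable M f" "square_integrable M g"
  shows "square_integrable M (\<lambda>w. f w + g w)"
proof -
  have "(\<lambda>w. (f w + g w)\<^sup>2) = (\<lambda>w. (f w)\<^sup>2 + (2 * (f w * g w) + (g w)\<^sup>2))"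
    by (auto simp: power2_eq_square algebra_simps)
  then show ?thesis
    using assms square_integrable_mult_integrable[OF assms] by (auto simp: square_integrable_def)
qed

lemma square_integrable_sum:
  assumes "\<And>j. j \<in> J \<Longrightarrow> square_integrable M (g j)"
  shows "square_integrable M (\<lambda>w. \<Sum>j\<in>J. g j w)"
  using assms
  by (induction J rule: infinite_finite_induct)
     (simp_all add: square_integrable_add, simp_all add: square_integrable_def)

lemma l2_norm_nonneg: "0 \<le> l2_norm M f"
  unfolding l2_norm_def l2_inner_def by (simp add: integral_nonneg_AE)

lemma l2_norm_square: "(l2_norm M f)\<^sup>2 = integral\<^sup>L M (\<lambda>w. (f w)\<^sup>2)"
  unfolding l2_norm_def l2_inner_def by (simp add: integral_nonneg_AE power2_eq_square)

lemma l2_norm_scale_square: "(l2_norm M (\<lambda>w. k * f w))\<^sup>2 = k\<^sup>2 * (l2_norm M f)\<^sup>2"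
  by (simp add: l2_norm_square power_mult_distrib)

lemma l2_norm_lincomb_square:
  assumes "square_integrable M f" "square_integrable M g"
  shows "(l2_norm M (\<lambda>w. x * f w + y * g w))\<^sup>2 =
    x\<^sup>2 * (l2_norm M f)\<^sup>2 + 2 * x * y * l2_inner M f g + y\<^sup>2 * (l2_norm M g)\<^sup>2"
proof -
  have "(\<lambda>w. (x * f w + y * g w)\<^sup>2) =
      (\<lambda>w. x\<^sup>2 * (f w)\<^sup>2 + (2 * x * y * (f w * g w) + y\<^sup>2 * (g w)\<^sup>2))"
    by (auto simp: power2_eq_square algebra_simps)
  then show ?thesis
    using assms square_integrable_mult_integrable[OF assms]
    by (simp add: l2_norm_square l2_inner_def square_integrable_def)
qed

(* A function of norm zero is orthogonal to everything (the degenerate case of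
   Cauchy-Schwarz, proved by minimising the quadratic t \<mapsto> ||t f + g||^2). *)
lemma l2_inner_eq_0_if_l2_norm_eq_0:
  assumes "square_integrable M f" "square_integrable M g" "l2_norm M f = 0"
  shows "l2_inner M f g = 0"
proof (rule ccontr)
  define s where "s = l2_inner M f g"
  assume "s \<noteq> 0"
  define t where "t = - ((l2_norm M g)\<^sup>2 + 1) / (2 * s)"
  have "0 \<le> (l2_norm M (\<lambda>w. t * f w + 1 * g w))\<^sup>2" by simp
  also have "\<dots> = 2 * t * s + (l2_norm M g)\<^sup>2"
    using l2_norm_lincomb_square[OF assms(1,2), of t 1] assms(3) by (simp add: s_def)
  also have "\<dots> = -1" using \<open>s \<noteq> 0\<close> by (simp add: t_def field_simps)
  finally show False by simp
qed

lemma l2_norm_sum_square_le_card: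
  assumes "finite J" "\<And>j. j \<in> J \<Longrightarrow> square_integrable M (g j)"
  shows "(l2_norm M (\<lambda>w. \<Sum>j\<in>J. g j w))\<^sup>2 \<le> real (card J) * (\<Sum>j\<in>J. (l2_norm M (g j))\<^sup>2)"
proof -
  have pointwise: "(\<Sum>j\<in>J. g j w)\<^sup>2 \<le> real (card J) * (\<Sum>j\<in>J. (g j w)\<^sup>2)" for w
    using Cauchy_Schwarz_ineq_sum[of "\<lambda>_. 1" "\<lambda>j. g j w" J] by simp
  have "integral\<^sup>L M (\<lambda>w. (\<Sum>j\<in>J. g j w)\<^sup>2) \<le> integral\<^sup>L M (\<lambda>w. real (card J) * (\<Sum>j\<in>J. (g j w)\<^sup>2))"
    using square_integrable_sum[of J M g] assms pointwise
    by (intro integral_mono) (auto simp: square_integrable_def)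
  also have "\<dots> = real (card J) * (\<Sum>j\<in>J. integral\<^sup>L M (\<lambda>w. (g j w)\<^sup>2))"
    using assms by (simp add: square_integrable_def)
  finally show ?thesis by (simp add: l2_norm_square)
qed

(* If the correlation of f and g is at least -r with 0 <= r, then
   ||f + g||^2 >= (1 - r)(||f||^2 + ||g||^2), because 2 ||f|| ||g|| <= ||f||^2 + ||g||^2. *)
lemma l2_norm_add_square_ge:
  assumes "square_integrable M f" "square_integrable M g" "0 \<le> r"
    and "- (r * l2_norm M f * l2_norm M g) \<le> l2_inner M f g"
  shows "(1 - r) * ((l2_norm M f)\<^sup>2 + (l2_norm M g)\<^sup>2) \<le> (l2_norm M (\<lambda>w. f w + g w))\<^sup>2"
proof -
  have "0 \<le> r * (l2_norm M f - l2_norm M g)\<^sup>2" using assms(3) by simp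
  moreover have "(l2_norm M (\<lambda>w. f w + g w))\<^sup>2 =
      (l2_norm M f)\<^sup>2 + 2 * l2_inner M f g + (l2_norm M g)\<^sup>2"
    using l2_norm_lincomb_square[OF assms(1,2), of 1 1] by simp
  ultimately show ?thesis using assms(4) by (simp add: power2_eq_square algebra_simps)
qed

lemma Hsp_square_integrable:
  assumes "f \<in> Hsp M X q j" "X j \<in> borel_measurable M"
  shows "square_integrable M f"
  using assms by (auto simp: Hsp_def square_integrable_def)

lemma Hsp_scale:
  assumes "f \<in> Hsp M X q j"
  shows "(\<lambda>w. k * f w) \<in> Hsp M X q j"
proof -
  obtain h where h: "f = (\<lambda>w. h (X j w))" "h \<in> borel_measurable borel"
    "integrable M (\<lambda>w. (h (X j w))\<^sup>2)" "j < q \<longrightarrow> integral\<^sup>L M (\<lambda>w. h (X j w)) = 0"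
    using assms by (auto simp: Hsp_def)
  then show ?thesis
    unfolding Hsp_def by (intro CollectI exI[of _ "\<lambda>x. k * h x"]) (auto simp: power_mult_distrib)
qed

lemma sum_in_HJ:
  assumes "\<forall>j\<in>J. g j \<in> Hsp M X q j"
  shows "(\<lambda>w. \<Sum>j\<in>J. g j w) \<in> HJ M X q J"
  using assms unfolding HJ_def by blast

lemma HJ_uminus:
  assumes "h \<in> HJ M X q J"
  shows "(\<lambda>w. - h w) \<in> HJ M X q J"
proof -
  obtain g where g: "h = (\<lambda>w. \<Sum>j\<in>J. g j w)" "\<forall>j\<in>J. g j \<in> Hsp M X q j"
    using assms unfolding HJ_def by blast
  have "(\<lambda>w. \<Sum>j\<in>J. (-1) * g j w) \<in> HJ M X q J"
    using g(2) Hsp_scale by (intro sum_in_HJ) blast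
  then show ?thesis unfolding g(1) by (simp add: sum_negf)
qed

lemma HJ_square_integrable:
  assumes "h \<in> HJ M X q J" "\<forall>j\<in>J. X j \<in> borel_measurable M"
  shows "square_integrable M h"
proof -
  obtain g where "h = (\<lambda>w. \<Sum>j\<in>J. g j w)" "\<forall>j\<in>J. g j \<in> Hsp M X q j"
    using assms(1) unfolding HJ_def by blast
  then show ?thesis using assms(2) by (auto intro!: square_integrable_sum Hsp_square_integrable)
qed

lemma l2_norm_sum_Hsp_square_le:
  assumes "J \<subseteq> {1..q}" "card J \<le> n" "\<forall>j\<in>J. g j \<in> Hsp M X q j"
    and "\<forall>j\<in>{1..q}. X j \<in> borel_measurable M"
  shows "(l2_norm M (\<lambda>w. \<Sum>j\<in>J. g j w))\<^sup>2 \<le> real n * (\<Sum>j\<in>J. (l2_norm M (g j))\<^sup>2)"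
proof -
  have "(l2_norm M (\<lambda>w. \<Sum>j\<in>J. g j w))\<^sup>2 \<le> real (card J) * (\<Sum>j\<in>J. (l2_norm M (g j))\<^sup>2)"
    using assms finite_subset[OF assms(1)]
    by (intro l2_norm_sum_square_le_card) (auto intro: Hsp_square_integrable)
  also have "\<dots> \<le> real n * (\<Sum>j\<in>J. (l2_norm M (g j))\<^sup>2)"
    using assms(2) by (intro mult_right_mono) (auto simp: sum_nonneg)
  finally show ?thesis .
qed

definition corr_bounded :: "'a measure \<Rightarrow> (nat \<Rightarrow> 'a \<Rightarrow> real) \<Rightarrow> nat \<Rightarrow> nat \<Rightarrow> real \<Rightarrow> bool" where
  "corr_bounded M X q qs r \<longleftrightarrow> (\<forall>J1 J2 h1 h2.
      J1 \<subseteq> {1..q} \<and> J2 \<subseteq> {1..q} \<and> J1 \<inter> J2 = {} \<and> card J1 \<le> qs \<and> card J2 \<le> qs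
      \<and> h1 \<in> HJ M X q J1 \<and> h2 \<in> HJ M X q J2 \<and> l2_norm M h1 \<noteq> 0 \<and> l2_norm M h2 \<noteq> 0
      \<longrightarrow> l2_inner M h1 h2 / (l2_norm M h1 * l2_norm M h2) \<le> r)"

lemma rho_le_iff: "rho M X q qs \<le> ereal r \<longleftrightarrow> corr_bounded M X q qs r"
  unfolding rho_def corr_bounded_def Sup_le_iff by (auto; metis ereal_less_eq(3))

lemma rho_less_one_iff: "rho M X q qs < 1 \<longleftrightarrow> (\<exists>r\<ge>0. r < 1 \<and> corr_bounded M X q qs r)"
proof
  assume "rho M X q qs < 1"
  then obtain r where "rho M X q qs < ereal r" "ereal r < 1"
    using ereal_dense2 by blast
  moreover have "ereal r \<le> ereal (max r 0)" by simp
  ultimately have "rho M X q qs \<le> ereal (max r 0)" "max r 0 < 1"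
    by (auto intro: order.trans[OF less_imp_le])
  then show "\<exists>r\<ge>0. r < 1 \<and> corr_bounded M X q qs r"
    unfolding rho_le_iff by (intro exI[of _ "max r 0"]) simp
next
  assume "\<exists>r\<ge>0. r < 1 \<and> corr_bounded M X q qs r"
  then obtain r where "r < 1" "rho M X q qs \<le> ereal r" by (auto simp: rho_le_iff)
  then show "rho M X q qs < 1" by (simp add: le_less_trans)
qed

(* Since H_J is closed under negation, the correlation bound also bounds correlations
   from below: <h1,h2> >= -r ||h1|| ||h2||.  Degenerate (zero norm) pairs are orthogonal. *)
lemma corr_bounded_imp_inner_ge:
  assumes corr: "corr_bounded M X q qs r" and Xm: "\<forall>j\<in>{1..q}. X j \<in> borel_measurable M"
    and J: "J1 \<subseteq> {1..q}" "J2 \<subseteq> {1..q}" "J1 \<inter> J2 = {}" "card J1 \<le> qs" "card J2 \<le> qs"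
    and h: "h1 \<in> HJ M X q J1" "h2 \<in> HJ M X q J2"
  shows "- (r * l2_norm M h1 * l2_norm M h2) \<le> l2_inner M h1 h2"
proof (cases "l2_norm M h1 = 0 \<or> l2_norm M h2 = 0")
  case True
  have sq: "square_integrable M h1" "square_integrable M h2"
    using h J Xm by (auto intro!: HJ_square_integrable)
  have "l2_inner M h1 h2 = 0"
    using True l2_inner_eq_0_if_l2_norm_eq_0[OF sq] l2_inner_eq_0_if_l2_norm_eq_0[OF sq(2,1)]
    by (auto simp: l2_inner_def mult.commute)
  then show ?thesis using True by auto
next
  case False
  have "l2_norm M (\<lambda>w. - h2 w) = l2_norm M h2" "l2_inner M h1 (\<lambda>w. - h2 w) = - l2_inner M h1 h2"
    by (simp_all add: l2_norm_def l2_inner_def)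
  moreover have "l2_inner M h1 (\<lambda>w. - h2 w) / (l2_norm M h1 * l2_norm M (\<lambda>w. - h2 w)) \<le> r"
    using corr[unfolded corr_bounded_def, rule_format, of J1 J2 h1 "\<lambda>w. - h2 w"]
      J h(1) HJ_uminus[OF h(2)] False calculation(1) by simp
  moreover have "0 < l2_norm M h1 * l2_norm M h2"
    using False l2_norm_nonneg[of M h1] l2_norm_nonneg[of M h2] by simp
  ultimately show ?thesis
    using pos_divide_le_eq[of "l2_norm M h1 * l2_norm M h2" "- l2_inner M h1 h2" r]
    by (simp add: mult.assoc)
qed

definition riesz_lower :: "'a measure \<Rightarrow> (nat \<Rightarrow> 'a \<Rightarrow> real) \<Rightarrow> nat \<Rightarrow> nat \<Rightarrow> real \<Rightarrow> bool" where
  "riesz_lower M X q m e \<longleftrightarrow> (\<forall>J g. J \<subseteq> {1..q} \<and> card J \<le> m \<and> (\<forall>j\<in>J. g j \<in> Hsp M X q j) \<longrightarrow>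
      (l2_norm M (\<lambda>\<omega>. \<Sum>j\<in>J. g j \<omega>))\<^sup>2 \<ge> (1 - e) * (\<Sum>j\<in>J. (l2_norm M (g j))\<^sup>2))"

(* On a probability space the constants lie in H_q, so every admissible e is >= 0. *)
lemma riesz_lower_nonneg:
  assumes "prob_space M" "q \<ge> 1" "m \<ge> 1" "riesz_lower M X q m e"
  shows "0 \<le> e"
proof -
  interpret prob_space M by (fact assms(1))
  have const: "(\<lambda>w. 1) \<in> Hsp M X q q"
    unfolding Hsp_def by (intro CollectI exI[of _ "\<lambda>x. 1"]) simp
  have norm1: "(l2_norm M (\<lambda>w. 1))\<^sup>2 = 1"
    by (simp add: l2_norm_square prob_space)
  show ?thesis
    using assms(4)[unfolded riesz_lower_def, rule_format, of "{q}" "\<lambda>_ w. 1"] assms(2,3) const norm1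
    by simp
qed

lemma eps_less_one_iff:
  assumes "prob_space M" "q \<ge> 1" "m \<ge> 1"
  shows "eps M X q m < 1 \<longleftrightarrow> (\<exists>e<1. riesz_lower M X q m e)"
proof -
  have eps_eq: "eps M X q m = Inf (Collect (riesz_lower M X q m))"
    unfolding eps_def riesz_lower_def ..
  have "riesz_lower M X q m 1" by (simp add: riesz_lower_def)
  moreover have "bdd_below (Collect (riesz_lower M X q m))"
    using riesz_lower_nonneg[OF assms] by (intro bdd_belowI[of _ 0]) simp
  ultimately show ?thesis
    unfolding eps_eq using cInf_lessD[of "Collect (riesz_lower M X q m)" 1]
    by (auto intro: le_less_trans[OF cInf_lower])
qed

lemma corr_bounded_imp_norm_add_ge:
  assumes corr: "corr_bounded M X q qs r" and Xm: "\<forall>j\<in>{1..q}. X j \<in> borel_measurable M"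
    and r: "0 \<le> r"
    and J: "J1 \<subseteq> {1..q}" "J2 \<subseteq> {1..q}" "J1 \<inter> J2 = {}" "card J1 \<le> qs" "card J2 \<le> qs"
    and h: "h1 \<in> HJ M X q J1" "h2 \<in> HJ M X q J2"
  shows "(1 - r) * ((l2_norm M h1)\<^sup>2 + (l2_norm M h2)\<^sup>2) \<le> (l2_norm M (\<lambda>w. h1 w + h2 w))\<^sup>2"
proof (rule l2_norm_add_square_ge[OF _ _ r])
  show "square_integrable M h1" "square_integrable M h2"
    using h J Xm by (auto intro!: HJ_square_integrable)
  show "- (r * l2_norm M h1 * l2_norm M h2) \<le> l2_inner M h1 h2"
    by (rule corr_bounded_imp_inner_ge[OF corr Xm J h])
qed

lemma corr_bounded_imp_riesz_lower_small:
  assumes corr: "corr_bounded M X q qs r" and Xm: "\<forall>j\<in>{1..q}. X j \<in> borel_measurable M"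
    and r: "0 \<le> r" "r \<le> 1" and qs: "qs \<ge> 1"
    and J: "J \<subseteq> {1..q}" "card J \<le> qs" and g: "\<forall>j\<in>J. g j \<in> Hsp M X q j"
  shows "(1 - r) ^ card J * (\<Sum>j\<in>J. (l2_norm M (g j))\<^sup>2) \<le> (l2_norm M (\<lambda>w. \<Sum>j\<in>J. g j w))\<^sup>2"
proof -
  have "finite J" using J(1) finite_subset by blast
  then show ?thesis using J g
  proof (induction J rule: finite_induct)
    case empty
    then show ?case by simp
  next
    case (insert j F)
    define c where "c = 1 - r"
    define S where "S = (\<Sum>i\<in>F. (l2_norm M (g i))\<^sup>2)"
    define h where "h = (\<lambda>w. \<Sum>i\<in>F. g i w)"
    have c: "0 \<le> c" "c \<le> 1" using r by (auto simp: c_def)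
    have S: "0 \<le> S" unfolding S_def by (simp add: sum_nonneg)
    have gj: "g j \<in> HJ M X q {j}"
      using sum_in_HJ[of "{j}" g] insert.prems(3) by simp
    have h: "h \<in> HJ M X q F"
      unfolding h_def using insert.prems(3) by (intro sum_in_HJ) simp
    have IH: "c ^ card F * S \<le> (l2_norm M h)\<^sup>2"
      using insert by (simp add: c_def S_def h_def)
    have "c ^ card (insert j F) * (\<Sum>i\<in>insert j F. (l2_norm M (g i))\<^sup>2)
        = c * (c ^ card F * (l2_norm M (g j))\<^sup>2) + c * (c ^ card F * S)"
      using insert.hyps by (simp add: S_def algebra_simps)
    also have "\<dots> \<le> c * (l2_norm M (g j))\<^sup>2 + c * (l2_norm M h)\<^sup>2"
      using c IH by (intro add_mono mult_left_mono mult_left_le_one_le) (simp_all add: power_le_one)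
    also have "\<dots> \<le> (l2_norm M (\<lambda>w. g j w + h w))\<^sup>2"
      using corr_bounded_imp_norm_add_ge[OF corr Xm r(1) _ _ _ _ _ gj h] insert qs
      by (simp add: c_def distrib_left)
    finally show ?case using insert.hyps by (simp add: c_def h_def)
  qed
qed

(* First direction: splitting a set of size <= 2q* into two halves of size <= q* gives
   epsilon_{2q*} <= 1 - (1 - r)^(q*+1). *)
lemma corr_bounded_imp_riesz_lower:
  assumes corr: "corr_bounded M X q qs r" and Xm: "\<forall>j\<in>{1..q}. X j \<in> borel_measurable M"
    and r: "0 \<le> r" "r \<le> 1" and qs: "qs \<ge> 1"
  shows "riesz_lower M X q (2 * qs) (1 - (1 - r) ^ Suc qs)"
  unfolding riesz_lower_def
proof (intro allI impI, elim conjE)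
  fix J g assume J: "J \<subseteq> {1..q}" "card J \<le> 2 * qs" and g: "\<forall>j\<in>J. g j \<in> Hsp M X q j"
  have fin: "finite J" using J(1) finite_subset by blast
  obtain J1 where J1: "J1 \<subseteq> J" "card J1 = min qs (card J)"
    using obtain_subset_with_card_n[of "min qs (card J)" J] by auto
  define J2 where "J2 = J - J1"
  have parts: "J = J1 \<union> J2" "J1 \<inter> J2 = {}" "J1 \<subseteq> {1..q}" "J2 \<subseteq> {1..q}"
    using J1 J(1) by (auto simp: J2_def)
  have cards: "card J1 \<le> qs" "card J2 \<le> qs"
    using J1 J(2) fin by (auto simp: J2_def card_Diff_subset finite_subset)
  define c where "c = 1 - r"
  have c: "0 \<le> c" "c \<le> 1" using r by (auto simp: c_def)
  define S where "S = (\<lambda>I. \<Sum>j\<in>I. (l2_norm M (g j))\<^sup>2)"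
  define h where "h = (\<lambda>I w. \<Sum>j\<in>I. g j w)"
  have small: "c ^ qs * S I \<le> (l2_norm M (h I))\<^sup>2" if "I \<subseteq> J" "card I \<le> qs" for I
  proof -
    have "c ^ qs * S I \<le> c ^ card I * S I"
      using c that(2) by (intro mult_right_mono power_decreasing) (simp_all add: S_def sum_nonneg)
    also have "\<dots> \<le> (l2_norm M (h I))\<^sup>2"
      unfolding c_def S_def h_def
      by (rule corr_bounded_imp_riesz_lower_small[OF corr Xm r qs]) (use that J g in auto)
    finally show ?thesis .
  qed
  have HJ: "h J1 \<in> HJ M X q J1" "h J2 \<in> HJ M X q J2"
    unfolding h_def using g parts by (auto intro!: sum_in_HJ)
  have "(1 - (1 - c ^ Suc qs)) * S J = c * (c ^ qs * S J1 + c ^ qs * S J2)"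
    using fin parts by (simp add: S_def sum.union_disjoint algebra_simps)
  also have "\<dots> \<le> c * ((l2_norm M (h J1))\<^sup>2 + (l2_norm M (h J2))\<^sup>2)"
    using small J1 parts cards c by (intro mult_left_mono add_mono) auto
  also have "\<dots> \<le> (l2_norm M (\<lambda>w. h J1 w + h J2 w))\<^sup>2"
    unfolding c_def by (rule corr_bounded_imp_norm_add_ge[OF corr Xm r(1) parts(3,4,2) cards HJ])
  also have "(\<lambda>w. h J1 w + h J2 w) = h J"
    using fin parts by (simp add: h_def sum.union_disjoint)
  finally show "(1 - (1 - (1 - r) ^ Suc qs)) * (\<Sum>j\<in>J. (l2_norm M (g j))\<^sup>2)
      \<le> (l2_norm M (\<lambda>w. \<Sum>j\<in>J. g j w))\<^sup>2"
    by (simp add: c_def S_def h_def)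
qed

lemma riesz_lower_pair:
  assumes riesz: "riesz_lower M X q m e"
    and J: "J1 \<subseteq> {1..q}" "J2 \<subseteq> {1..q}" "J1 \<inter> J2 = {}" "card J1 + card J2 \<le> m"
    and g: "\<forall>j\<in>J1. g1 j \<in> Hsp M X q j" "\<forall>j\<in>J2. g2 j \<in> Hsp M X q j"
  shows "(1 - e) * (x\<^sup>2 * (\<Sum>j\<in>J1. (l2_norm M (g1 j))\<^sup>2) + y\<^sup>2 * (\<Sum>j\<in>J2. (l2_norm M (g2 j))\<^sup>2))
    \<le> (l2_norm M (\<lambda>w. x * (\<Sum>j\<in>J1. g1 j w) + y * (\<Sum>j\<in>J2. g2 j w)))\<^sup>2"
proof -
  define g where "g j = (if j \<in> J1 then (\<lambda>w. x * g1 j w) else (\<lambda>w. y * g2 j w))" for j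
  have fin: "finite J1" "finite J2" using J(1,2) finite_subset by auto
  have g_J2: "g j = (\<lambda>w. y * g2 j w)" if "j \<in> J2" for j
    using that J(3) by (auto simp: g_def)
  have gH: "\<forall>j\<in>J1 \<union> J2. g j \<in> Hsp M X q j"
    using g g_J2 by (auto simp: g_def intro: Hsp_scale)
  have card: "card (J1 \<union> J2) \<le> m" using card_Un_le[of J1 J2] J(4) by simp
  have "(\<lambda>w. \<Sum>j\<in>J1 \<union> J2. g j w) = (\<lambda>w. x * (\<Sum>j\<in>J1. g1 j w) + y * (\<Sum>j\<in>J2. g2 j w))"
    using fin J(3) g_J2 by (simp add: sum.union_disjoint sum_distrib_left g_def)
  moreover have "(\<Sum>j\<in>J1 \<union> J2. (l2_norm M (g j))\<^sup>2) =
      x\<^sup>2 * (\<Sum>j\<in>J1. (l2_norm M (g1 j))\<^sup>2) + y\<^sup>2 * (\<Sum>j\<in>J2. (l2_norm M (g2 j))\<^sup>2)"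
    using fin J(3) g_J2
    by (simp add: sum.union_disjoint sum_distrib_left g_def l2_norm_scale_square)
  ultimately show ?thesis
    using riesz[unfolded riesz_lower_def, rule_format, of "J1 \<union> J2" g] J(1,2) card gH by simp
qed

(* Second direction: applying the lower Riesz inequality to h1/||h1|| - h2/||h2|| and
   using ||h_i||^2 <= q* \<Sum> ||g_j||^2 bounds every correlation by 1 - (1 - e)/q*. *)
lemma riesz_lower_imp_corr_bounded:
  assumes riesz: "riesz_lower M X q (2 * qs) e" and e: "e \<le> 1"
    and Xm: "\<forall>j\<in>{1..q}. X j \<in> borel_measurable M" and qs: "qs \<ge> 1"
  shows "corr_bounded M X q qs (1 - (1 - e) / real qs)"
  unfolding corr_bounded_def
proof (intro allI impI, elim conjE)
  fix J1 J2 h1 h2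
  assume J: "J1 \<subseteq> {1..q}" "J2 \<subseteq> {1..q}" "J1 \<inter> J2 = {}" "card J1 \<le> qs" "card J2 \<le> qs"
    and h: "h1 \<in> HJ M X q J1" "h2 \<in> HJ M X q J2" "l2_norm M h1 \<noteq> 0" "l2_norm M h2 \<noteq> 0"
  obtain g1 where g1: "h1 = (\<lambda>w. \<Sum>j\<in>J1. g1 j w)" "\<forall>j\<in>J1. g1 j \<in> Hsp M X q j"
    using h(1) unfolding HJ_def by blast
  obtain g2 where g2: "h2 = (\<lambda>w. \<Sum>j\<in>J2. g2 j w)" "\<forall>j\<in>J2. g2 j \<in> Hsp M X q j"
    using h(2) unfolding HJ_def by blast
  define a where "a = l2_norm M h1"
  define b where "b = l2_norm M h2"
  define s where "s = l2_inner M h1 h2"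
  define S1 where "S1 = (\<Sum>j\<in>J1. (l2_norm M (g1 j))\<^sup>2)"
  define S2 where "S2 = (\<Sum>j\<in>J2. (l2_norm M (g2 j))\<^sup>2)"
  have ab: "0 < a" "0 < b"
    using h(3,4) l2_norm_nonneg[of M h1] l2_norm_nonneg[of M h2] by (auto simp: a_def b_def)
  have sq: "square_integrable M h1" "square_integrable M h2"
    using h(1,2) J(1,2) Xm by (auto intro!: HJ_square_integrable)
  have "a\<^sup>2 \<le> real qs * S1" "b\<^sup>2 \<le> real qs * S2"
    unfolding a_def b_def S1_def S2_def g1(1) g2(1)
    using J g1(2) g2(2) Xm by (auto intro!: l2_norm_sum_Hsp_square_le)
  then have S1: "1 / real qs \<le> (1 / a)\<^sup>2 * S1" and S2: "1 / real qs \<le> (- 1 / b)\<^sup>2 * S2"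
    using ab qs by (simp_all add: field_simps)
  have "(1 - e) * (2 / real qs) \<le> (1 - e) * ((1 / a)\<^sup>2 * S1 + (- 1 / b)\<^sup>2 * S2)"
    using S1 S2 e by (intro mult_left_mono) auto
  also have "\<dots> \<le> (l2_norm M (\<lambda>w. (1 / a) * h1 w + (- 1 / b) * h2 w))\<^sup>2"
    unfolding S1_def S2_def g1(1) g2(1)
    by (rule riesz_lower_pair[OF riesz J(1-3) _ g1(2) g2(2)]) (use J(4,5) in simp)
  also have "\<dots> = (1 / a)\<^sup>2 * a\<^sup>2 + 2 * (1 / a) * (- 1 / b) * s + (- 1 / b)\<^sup>2 * b\<^sup>2"
    by (simp only: l2_norm_lincomb_square[OF sq] a_def b_def s_def)
  also have "\<dots> = 2 - 2 * (s / (a * b))"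
    using ab by (simp add: field_simps power2_eq_square)
  finally have "(1 - e) * (2 / real qs) \<le> 2 - 2 * (s / (a * b))" .
  moreover have "(1 - e) * (2 / real qs) = 2 * ((1 - e) / real qs)" by simp
  ultimately have "s / (a * b) \<le> 1 - (1 - e) / real qs" by linarith
  then show "l2_inner M h1 h2 / (l2_norm M h1 * l2_norm M h2) \<le> 1 - (1 - e) / real qs"
    by (simp add: a_def b_def s_def)
qed

theorem lemma2:
  fixes M :: "'a measure" and X :: "nat \<Rightarrow> 'a \<Rightarrow> real" and q qs :: nat
  assumes "prob_space M"
    and "q \<ge> 1" and "qs \<ge> 1"
    and "\<forall>j\<in>{1..q}. X j \<in> borel_measurable M"
  shows "rho M X q qs < 1 \<longleftrightarrow> eps M X q (2 * qs) < 1"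
proof
  assume "rho M X q qs < 1"
  then obtain r where r: "0 \<le> r" "r < 1" "corr_bounded M X q qs r"
    by (auto simp: rho_less_one_iff)
  then have "riesz_lower M X q (2 * qs) (1 - (1 - r) ^ Suc qs)"
    using corr_bounded_imp_riesz_lower[OF r(3) assms(4) r(1) _ assms(3)] by simp
  moreover have "1 - (1 - r) ^ Suc qs < 1" using r(2) by simp
  ultimately have "\<exists>e<1. riesz_lower M X q (2 * qs) e" by blast
  then show "eps M X q (2 * qs) < 1"
    using eps_less_one_iff[OF assms(1,2)] assms(3) by simp
next
  assume "eps M X q (2 * qs) < 1"
  then obtain e where e: "e < 1" "riesz_lower M X q (2 * qs) e"
    using eps_less_one_iff[OF assms(1,2)] assms(3) by auto
  then have "0 \<le> e" using riesz_lower_nonneg[OF assms(1,2) _ e(2)] assms(3) by simp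
  then have "0 \<le> 1 - (1 - e) / real qs" "1 - (1 - e) / real qs < 1"
    using e(1) assms(3) by (auto simp: field_simps)
  moreover have "corr_bounded M X q qs (1 - (1 - e) / real qs)"
    using riesz_lower_imp_corr_bounded[OF e(2) _ assms(4,3)] e(1) by simp
  ultimately show "rho M X q qs < 1" unfolding rho_less_one_iff by blast
qed

end
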